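(* Let $d\in\mathbb{N}_+$ with $d>1$, and let $\sigma:\mathbb{R}\to\mathbb{R}$ be a Lipschitz activation function. Then the set $\mathrm{NODE}_{\sigma}([0,1]^d)$ is not universal in $\mathcal{H}_d([0,1]^d)$, i.e. it is not dense in $\mathcal{H}_d([0,1]^d)$ with respect to the uniform metric $d_\infty(\varphi,\psi)=\sup_{x\in\mathbb{R}^d}\|\varphi(x)-\psi(x)\|$.
   Context: For $P\subseteq\mathbb{R}^d$, $\mathcal{H}_d(P)$ denotes the set of orientation-preserving (i.e. homotopic to the identity) homeomorphisms $\varphi:\mathbb{R}^d\to\mathbb{R}^d$ that are compactly supported$^\dagger$ on $P$, meaning $\varphi(x)=x$ for every $x$ outside a compact subset of $P$ (for $P=[0,1]^d$: $\varphi(x)=x$ for all $x\notin[0,1]^d$). It carries the uniform metric $d_\infty$, which is finite on $\mathcal{H}_d(P)$ for compact $P$. A $\sigma$-MLP $\Phi:\mathbb{R}^{d_1}\to\mathbb{R}^{d_{\Delta+1}}$ is a map of the form $\Phi(x)=W^{(\Delta)}x^{(\Delta)}+b^{(\Delta)}$, $x^{(l+1)}=\sigma\bullet(W^{(l)}x^{(l)}+b^{(l)})$ for $l=1,\dots,\Delta-1$, $x^{(1)}=x$, with real weight matrices $W^{(l)}$, biases $b^{(l)}$, and $\sigma$ applied componentwise (any depth and width). For a Lipschitz vector field $V:\mathbb{R}^d\to\mathbb{R}^d$, $\mathrm{Flow}(V)$ is the time-$1$ map $x\mapsto x_1^x$ of the ODE $\dot x_t^x=V(x_t^x)$, $x_0^x=x$.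 $\mathrm{NODE}_\sigma(P)$ is the set of maps $\mathrm{Flow}(\Phi)\in\mathcal{H}_d(P)$ where $\Phi:\mathbb{R}^d\to\mathbb{R}^d$ is a $\sigma$-MLP that vanishes outside $P$. *)

theory Defs
  imports "HOL-Analysis.Analysis"
begin

definition affine_layer :: "nat \<Rightarrow> (nat \<Rightarrow> nat \<Rightarrow> real) \<Rightarrow> (nat \<Rightarrow> real) \<Rightarrow> (nat \<Rightarrow> real) \<Rightarrow> (nat \<Rightarrow> real)"
  where "affine_layer n W b x = (\<lambda>i. (\<Sum>j<n. W i j * x j) + b i)"

text \<open>Evaluation of an MLP given as a nonempty list of layers (input width, W, b):
 activation after every layer except the last one.\<close>
fun mlp_eval :: "(real \<Rightarrow> real) \<Rightarrow> (nat \<times> (nat \<Rightarrow> nat \<Rightarrow> real) \<times> (nat \<Rightarrow> real)) list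
                 \<Rightarrow> (nat \<Rightarrow> real) \<Rightarrow> (nat \<Rightarrow> real)" where
  "mlp_eval \<sigma> [] x = x"
| "mlp_eval \<sigma> [(n, W, b)] x = affine_layer n W b x"
| "mlp_eval \<sigma> ((n, W, b) # L) x = mlp_eval \<sigma> L (\<lambda>i. \<sigma> (affine_layer n W b x i))"

text \<open>A sigma-MLP from R^d to R^d (d = CARD('n)); coordinates of real^'n are
 identified with {0..<d} via some bijection e.\<close>
definition is_sigma_MLP :: "(real \<Rightarrow> real) \<Rightarrow> (real^'n \<Rightarrow> real^'n) \<Rightarrow> bool" where
  "is_sigma_MLP \<sigma> \<Phi> \<longleftrightarrow> (\<exists>L (e :: 'n \<Rightarrow> nat). L \<noteq> [] \<and> fst (hd L) = CARD('n) \<and>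
      bij_betw e UNIV {..<CARD('n)} \<and>
      (\<forall>x. \<Phi> x = (\<chi> i. mlp_eval \<sigma> L (\<lambda>j. x $ (inv_into UNIV e j)) (e i))))"

definition Flow :: "('a::real_normed_vector \<Rightarrow> 'a) \<Rightarrow> 'a \<Rightarrow> 'a" where
  "Flow V x = (THE y. \<exists>\<gamma>. \<gamma> 0 = x \<and> \<gamma> 1 = y \<and>
       (\<forall>t\<in>{0..1}. (\<gamma> has_vector_derivative V (\<gamma> t)) (at t within {0..1})))"

definition H :: "(real^'n) set \<Rightarrow> (real^'n \<Rightarrow> real^'n) set" where
  "H P = {\<phi>. homeomorphism UNIV UNIV \<phi> (inv \<phi>) \<and>
              homotopic_with_canon (\<lambda>_. True) UNIV UNIV \<phi> id \<and>
              (\<exists>K. compact K \<and> K \<subseteq> P \<and> (\<forall>x. x \<notin> K \<longrightarrow> \<phi> x = x))}"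

definition NODE :: "(real \<Rightarrow> real) \<Rightarrow> (real^'n) set \<Rightarrow> (real^'n \<Rightarrow> real^'n) set" where
  "NODE \<sigma> P = {Flow \<Phi> | \<Phi>. is_sigma_MLP \<sigma> \<Phi> \<and> (\<forall>x. x \<notin> P \<longrightarrow> \<Phi> x = 0) \<and> Flow \<Phi> \<in> H P}"

definition d_inf :: "('a \<Rightarrow> 'b::real_normed_vector) \<Rightarrow> ('a \<Rightarrow> 'b) \<Rightarrow> real" where
  "d_inf \<phi> \<psi> = (SUP x. norm (\<phi> x - \<psi> x))"

definition unit_cube :: "(real^'n) set" where
  "unit_cube = {x. \<forall>i. 0 \<le> x $ i \<and> x $ i \<le> 1}"

end

theory Submission
  imports Defs
begin

text \<open>The counterexample \<open>\<phi>\<close> shrinks a small ball \<open>B\<close> around a point \<open>a\<close> by the factor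
  \<open>1/2\<close> and then exchanges \<open>a\<close> with a point \<open>b\<close> by a half turn in a coordinate plane (here
  \<open>d > 1\<close> is needed), so \<open>\<phi> \<circ> \<phi>\<close> contracts \<open>B\<close> while \<open>\<phi>\<close> moves \<open>B\<close> away.
  An MLP with Lipschitz activation is globally Lipschitz, so its time-one map \<open>\<psi>\<close> comes from
  a flow with unique trajectories. If \<open>\<psi>\<close> were uniformly close to \<open>\<phi>\<close>, Brouwer's theorem
  would give a fixed point \<open>p \<in> B\<close> of \<open>\<psi> \<circ> \<psi>\<close>; the trajectory through \<open>p\<close> is then
  2-periodic, so all its points are fixed by \<open>\<psi> \<circ> \<psi>\<close>, and on its way from \<open>p\<close> to \<open>\<psi> p \<notin> B\<close>
  it crosses the sphere of half the radius of \<open>B\<close>, where \<open>\<psi> \<circ> \<psi>\<close>, being close to a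
  contraction, has no fixed points.\<close>

section \<open>Time-one maps of Lipschitz vector fields\<close>

definition ivp_solution :: "('a::real_normed_vector \<Rightarrow> 'a) \<Rightarrow> 'a \<Rightarrow> real \<Rightarrow> (real \<Rightarrow> 'a) \<Rightarrow> bool" where
  "ivp_solution V x T \<gamma> \<longleftrightarrow>
     \<gamma> 0 = x \<and> (\<forall>t\<in>{0..T}. (\<gamma> has_vector_derivative V (\<gamma> t)) (at t within {0..T}))"

lemma ivp_solution_continuous: "ivp_solution V x T \<gamma> \<Longrightarrow> continuous_on {0..T} \<gamma>"
  unfolding ivp_solution_def continuous_on_eq_continuous_within
  using has_vector_derivative_continuous by blast

lemma ivp_solution_iff_integral_equation:
  fixes V :: "'a::banach \<Rightarrow> 'a"
  assumes V: "continuous_on UNIV V" and T: "0 \<le> T"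
  shows "ivp_solution V x T \<gamma> \<longleftrightarrow>
    continuous_on {0..T} \<gamma> \<and> (\<forall>t\<in>{0..T}. \<gamma> t = x + integral {0..t} (\<lambda>s. V (\<gamma> s)))"
proof
  assume sol: "ivp_solution V x T \<gamma>"
  have "\<gamma> t = x + integral {0..t} (\<lambda>s. V (\<gamma> s))" if t: "t \<in> {0..T}" for t
  proof -
    have "((\<lambda>s. V (\<gamma> s)) has_integral \<gamma> t - \<gamma> 0) {0..t}"
    proof (rule fundamental_theorem_of_calculus)
      fix s assume "s \<in> {0..t}"
      then have "(\<gamma> has_vector_derivative V (\<gamma> s)) (at s within {0..T})"
        using sol t by (auto simp: ivp_solution_def)
      then show "(\<gamma> has_vector_derivative V (\<gamma> s)) (at s within {0..t})"
        by (rule has_vector_derivative_within_subset) (use t in auto)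
    qed (use t in auto)
    then show ?thesis
      using sol by (simp add: integral_unique ivp_solution_def)
  qed
  with ivp_solution_continuous[OF sol]
  show "continuous_on {0..T} \<gamma> \<and> (\<forall>t\<in>{0..T}. \<gamma> t = x + integral {0..t} (\<lambda>s. V (\<gamma> s)))"
    by blast
next
  assume "continuous_on {0..T} \<gamma> \<and> (\<forall>t\<in>{0..T}. \<gamma> t = x + integral {0..t} (\<lambda>s. V (\<gamma> s)))"
  then have cont: "continuous_on {0..T} \<gamma>"
    and eq: "\<And>t. t \<in> {0..T} \<Longrightarrow> \<gamma> t = x + integral {0..t} (\<lambda>s. V (\<gamma> s))"
    by auto
  have "continuous_on {0..T} (\<lambda>s. V (\<gamma> s))"
    by (rule continuous_on_compose2[OF V cont]) auto
  then have "(\<gamma> has_vector_derivative V (\<gamma> t)) (at t within {0..T})" if t: "t \<in> {0..T}" for t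
    using integral_has_vector_derivative[OF _ t]
    by (intro has_vector_derivative_transform[OF t eq])
      (auto intro!: derivative_eq_intros)
  with eq[of 0] T show "ivp_solution V x T \<gamma>"
    by (simp add: ivp_solution_def)
qed

lemma integral_lipschitz_exp_bound:
  fixes V :: "'a::banach \<Rightarrow> 'a"
  assumes lip: "L-lipschitz_on UNIV V" and k: "0 < k" and \<tau>: "0 \<le> \<tau>"
    and cont: "continuous_on {0..\<tau>} \<gamma>" "continuous_on {0..\<tau>} \<delta>"
    and close: "\<And>s. s \<in> {0..\<tau>} \<Longrightarrow> norm (\<gamma> s - \<delta> s) \<le> D * exp (k * s)"
  shows "norm (integral {0..\<tau>} (\<lambda>s. V (\<gamma> s)) - integral {0..\<tau>} (\<lambda>s. V (\<delta> s)))
           \<le> L / k * D * exp (k * \<tau>)"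
proof -
  have L: "0 \<le> L" using lip by (rule lipschitz_on_nonneg)
  have "norm (\<gamma> 0 - \<delta> 0) \<le> D" using close[of 0] \<tau> by simp
  then have D: "0 \<le> D" by (meson norm_ge_zero order_trans)
  have V: "continuous_on UNIV V" using lip by (rule lipschitz_on_continuous_on)
  have int: "(\<lambda>s. V (f s)) integrable_on {0..\<tau>}" if "continuous_on {0..\<tau>} f" for f
    by (intro integrable_continuous_interval continuous_on_compose2[OF V that]) auto
  have exp_int: "((\<lambda>s. L * D * exp (k * s)) has_integral L * D * (exp (k * \<tau>) - 1) / k) {0..\<tau>}"
  proof -
    have "((\<lambda>s. L * D * exp (k * s)) has_integral
            L * D * exp (k * \<tau>) / k - L * D * exp (k * 0) / k) {0..\<tau>}"
      using k \<tau> by (intro fundamental_theorem_of_calculus)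
        (auto intro!: derivative_eq_intros simp: has_real_derivative_iff_has_vector_derivative[symmetric])
    then show ?thesis by (simp add: diff_divide_distrib right_diff_distrib)
  qed
  have "norm (integral {0..\<tau>} (\<lambda>s. V (\<gamma> s)) - integral {0..\<tau>} (\<lambda>s. V (\<delta> s)))
        = norm (integral {0..\<tau>} (\<lambda>s. V (\<gamma> s) - V (\<delta> s)))"
    by (simp add: integral_diff int cont)
  also have "\<dots> \<le> integral {0..\<tau>} (\<lambda>s. L * D * exp (k * s))"
  proof (rule integral_norm_bound_integral)
    fix s assume s: "s \<in> {0..\<tau>}"
    have "norm (V (\<gamma> s) - V (\<delta> s)) \<le> L * norm (\<gamma> s - \<delta> s)"
      using lipschitz_on_normD[OF lip] by blast
    also have "\<dots> \<le> L * (D * exp (k * s))" using close[OF s] L by (rule mult_left_mono)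
    finally show "norm (V (\<gamma> s) - V (\<delta> s)) \<le> L * D * exp (k * s)" by simp
  qed (use exp_int in \<open>auto intro!: integrable_diff int cont\<close>)
  also have "\<dots> = L * D * (exp (k * \<tau>) - 1) / k" using exp_int by (rule integral_unique)
  also have "\<dots> \<le> L / k * D * exp (k * \<tau>)"
    using L D k by (simp add: field_simps)
  finally show ?thesis .
qed

text \<open>Picard-Lindelof via Banach's fixed point theorem: \<open>u\<close> stands for the trajectory
  \<open>t \<mapsto> exp (k * t) *\<^sub>R u t\<close>, and for \<open>L / k \<le> 1/2\<close> this weight makes the Picard operator a
  \<open>1/2\<close>-contraction on all of \<open>[0, T]\<close>.\<close>

lemma weighted_picard_operator_contraction:
  fixes V :: "'a::banach \<Rightarrow> 'a" and P :: "(real \<Rightarrow>\<^sub>C 'a) \<Rightarrow> (real \<Rightarrow>\<^sub>C 'a)"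
  assumes lip: "L-lipschitz_on UNIV V" and k: "0 < k" "L / k \<le> 1/2" and T: "0 \<le> T"
    and P: "\<And>u t. apply_bcontfun (P u) t = exp (- k * clamp 0 T t) *\<^sub>R
              (x + integral {0..clamp 0 T t} (\<lambda>s. V (exp (k * s) *\<^sub>R u s)))"
  shows "dist (P u) (P w) \<le> 1/2 * dist u w"
proof (rule dist_bound)
  fix t
  define \<tau> where "\<tau> = clamp 0 T t"
  have \<tau>: "0 \<le> \<tau>" using clamp_in_interval[of 0 T t] T by (simp add: \<tau>_def cbox_interval)
  have bound: "norm (integral {0..\<tau>} (\<lambda>s. V (exp (k * s) *\<^sub>R u s))
                     - integral {0..\<tau>} (\<lambda>s. V (exp (k * s) *\<^sub>R w s)))
               \<le> L / k * dist u w * exp (k * \<tau>)"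
  proof (rule integral_lipschitz_exp_bound[OF lip k(1) \<tau>])
    fix s
    have "norm (exp (k * s) *\<^sub>R u s - exp (k * s) *\<^sub>R w s) = exp (k * s) * dist (u s) (w s)"
      by (simp add: dist_norm flip: scaleR_diff_right)
    also have "\<dots> \<le> dist u w * exp (k * s)" by (simp add: dist_bounded)
    finally show "norm (exp (k * s) *\<^sub>R u s - exp (k * s) *\<^sub>R w s) \<le> dist u w * exp (k * s)" .
  qed (auto intro!: continuous_intros)
  have "dist (P u t) (P w t) = exp (- k * \<tau>) * norm (integral {0..\<tau>} (\<lambda>s. V (exp (k * s) *\<^sub>R u s))
                                - integral {0..\<tau>} (\<lambda>s. V (exp (k * s) *\<^sub>R w s)))"
    by (simp add: P \<tau>_def[symmetric] dist_norm flip: scaleR_diff_right)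
  also have "\<dots> \<le> exp (- k * \<tau>) * (L / k * dist u w * exp (k * \<tau>))"
    using bound by (rule mult_left_mono) simp
  also have "\<dots> = L / k * dist u w" by (simp add: exp_minus field_simps)
  also have "\<dots> \<le> 1/2 * dist u w" using mult_right_mono[OF k(2) zero_le_dist[of u w]] by simp
  finally show "dist (P u t) (P w t) \<le> 1/2 * dist u w" .
qed

lemma ivp_solution_exists_unique:
  fixes V :: "'a::banach \<Rightarrow> 'a"
  assumes lip: "L-lipschitz_on UNIV V" and T: "0 \<le> T"
  shows "\<exists>\<gamma>. ivp_solution V x T \<gamma> \<and> (\<forall>\<delta>. ivp_solution V x T \<delta> \<longrightarrow> (\<forall>t\<in>{0..T}. \<delta> t = \<gamma> t))"
proof -
  have L: "0 \<le> L" using lip by (rule lipschitz_on_nonneg)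
  have V: "continuous_on UNIV V" using lip by (rule lipschitz_on_continuous_on)
  note sol_iff = ivp_solution_iff_integral_equation[OF V T]
  define k where "k = 2 * L + 2"
  have k: "0 < k" "L / k \<le> 1/2" using L by (auto simp: k_def field_simps)
  define G where "G u \<tau> = exp (- k * \<tau>) *\<^sub>R (x + integral {0..\<tau>} (\<lambda>s. V (exp (k * s) *\<^sub>R u s)))"
    for u :: "real \<Rightarrow>\<^sub>C 'a" and \<tau>
  have "continuous_on {0..T} (G u)" for u
    unfolding G_def
    by (intro continuous_intros indefinite_integral_continuous_1 integrable_continuous_interval
        continuous_on_compose2[OF V]) auto
  then have "\<exists>g. \<forall>t. apply_bcontfun g t = G u (clamp 0 T t)" for u
    by (metis continuous_on_cbox_bcontfunE cbox_interval)
  then obtain P where P: "\<And>u t. apply_bcontfun (P u) t = G u (clamp 0 T t)"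
    by metis
  have clamp_T: "clamp 0 T t \<in> {0..T}" for t :: real
    using clamp_in_interval[of 0 T t] T by (simp add: cbox_interval)
  have "\<exists>!u. P u = u"
    using weighted_picard_operator_contraction[OF lip k T, of P x] P
    by (intro banach_fix_type[of "1/2"]) (auto simp: G_def)
  then obtain u where fix_u: "P u = u" and uniq: "\<And>w. P w = w \<Longrightarrow> w = u" by blast
  define \<gamma> where "\<gamma> t = exp (k * t) *\<^sub>R u t" for t
  have "ivp_solution V x T \<gamma>"
    unfolding sol_iff
  proof (intro conjI ballI)
    show "continuous_on {0..T} \<gamma>" unfolding \<gamma>_def by (intro continuous_intros continuous_on_apply_bcontfun)
    fix t assume t: "t \<in> {0..T}"
    have "clamp 0 T t = t" using t clamp_cancel_cbox[of t 0 T] by (simp add: cbox_interval)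
    then have "u t = G u t" using P[of u t] fix_u by simp
    then show "\<gamma> t = x + integral {0..t} (\<lambda>s. V (\<gamma> s))"
      by (simp add: \<gamma>_def G_def exp_minus)
  qed
  moreover have "\<delta> t = \<gamma> t" if \<delta>: "ivp_solution V x T \<delta>" and t: "t \<in> {0..T}" for \<delta> t
  proof -
    have \<delta>_eq: "continuous_on {0..T} \<delta>" "\<And>t. t \<in> {0..T} \<Longrightarrow> \<delta> t = x + integral {0..t} (\<lambda>s. V (\<delta> s))"
      using \<delta> unfolding sol_iff by auto
    have "continuous_on (cbox 0 T) (\<lambda>t. exp (- k * t) *\<^sub>R \<delta> t)"
      unfolding cbox_interval by (intro continuous_intros \<delta>_eq(1))
    then obtain w where w: "\<And>t. t \<in> cbox 0 T \<Longrightarrow> apply_bcontfun w t = exp (- k * t) *\<^sub>R \<delta> t"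
      "\<And>t. apply_bcontfun w t = exp (- k * clamp 0 T t) *\<^sub>R \<delta> (clamp 0 T t)"
      by (rule continuous_on_cbox_bcontfunE) auto
    have w_\<delta>: "exp (k * s) *\<^sub>R w s = \<delta> s" if "s \<in> {0..T}" for s
      using w(1) that by (simp add: cbox_interval exp_minus)
    have "P w = w"
    proof (rule bcontfun_eqI)
      fix t
      have "integral {0..clamp 0 T t} (\<lambda>s. V (exp (k * s) *\<^sub>R w s))
            = integral {0..clamp 0 T t} (\<lambda>s. V (\<delta> s))"
        using clamp_T[of t] by (intro integral_cong) (auto simp: w_\<delta>)
      then show "P w t = w t"
        using \<delta>_eq(2)[OF clamp_T] by (simp add: P G_def w(2))
    qed
    then show ?thesis using uniq w_\<delta>[OF t] by (simp add: \<gamma>_def)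
  qed
  ultimately show ?thesis by blast
qed

lemma ivp_solution_exists:
  fixes V :: "'a::banach \<Rightarrow> 'a"
  assumes "L-lipschitz_on UNIV V" and "0 \<le> T"
  obtains \<gamma> where "ivp_solution V x T \<gamma>"
  using ivp_solution_exists_unique[OF assms] by blast

lemma ivp_solution_unique:
  fixes V :: "'a::banach \<Rightarrow> 'a"
  assumes "L-lipschitz_on UNIV V" and "ivp_solution V x T \<gamma>" "ivp_solution V x T \<delta>" "t \<in> {0..T}"
  shows "\<gamma> t = \<delta> t"
proof -
  have "0 \<le> T" using assms(4) by simp
  then show ?thesis using ivp_solution_exists_unique[OF assms(1)] assms(2-4) by metis
qed

lemma ivp_solution_restrict:
  "ivp_solution V x T \<gamma> \<Longrightarrow> T' \<le> T \<Longrightarrow> ivp_solution V x T' \<gamma>"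
  unfolding ivp_solution_def
  by (meson atLeastAtMost_iff atLeastatMost_subset_iff has_vector_derivative_within_subset
      order_refl order_trans)

lemma ivp_solution_shift:
  assumes sol: "ivp_solution V x T \<gamma>" and s: "s \<in> {0..T}"
  shows "ivp_solution V (\<gamma> s) (T - s) (\<lambda>t. \<gamma> (s + t))"
  unfolding ivp_solution_def
proof safe
  fix t assume t: "t \<in> {0..T - s}"
  have "(\<gamma> has_vector_derivative V (\<gamma> (s + t))) (at (s + t) within {0..T})"
    using sol s t by (auto simp: ivp_solution_def)
  then have "(\<gamma> has_vector_derivative V (\<gamma> (s + t))) (at (s + t) within (\<lambda>t. s + t) ` {0..T - s})"
    by (rule has_vector_derivative_within_subset) (use s in auto)
  moreover have "((\<lambda>t. s + t) has_vector_derivative 1) (at t within {0..T - s})"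
    by (auto intro!: derivative_eq_intros)
  ultimately show "((\<lambda>t. \<gamma> (s + t)) has_vector_derivative V (\<gamma> (s + t))) (at t within {0..T - s})"
    using vector_diff_chain_within by (force simp: o_def)
qed simp

lemma Flow_eq_ivp_solution:
  fixes V :: "'a::banach \<Rightarrow> 'a"
  assumes lip: "L-lipschitz_on UNIV V" and sol: "ivp_solution V x T \<gamma>" and T: "1 \<le> T"
  shows "Flow V x = \<gamma> 1"
proof -
  have sol1: "ivp_solution V x 1 \<gamma>" using sol T by (rule ivp_solution_restrict)
  show ?thesis
    unfolding Flow_def
  proof (rule the_equality)
    show "\<exists>\<delta>. \<delta> 0 = x \<and> \<delta> 1 = \<gamma> 1 \<and> (\<forall>t\<in>{0..1}. (\<delta> has_vector_derivative V (\<delta> t)) (at t within {0..1}))"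
      using sol1 by (auto simp: ivp_solution_def)
  next
    fix y
    assume "\<exists>\<delta>. \<delta> 0 = x \<and> \<delta> 1 = y \<and> (\<forall>t\<in>{0..1}. (\<delta> has_vector_derivative V (\<delta> t)) (at t within {0..1}))"
    then obtain \<delta> where "ivp_solution V x 1 \<delta>" "\<delta> 1 = y" by (auto simp: ivp_solution_def)
    then show "y = \<gamma> 1" using ivp_solution_unique[OF lip _ sol1, of \<delta> 1] by simp
  qed
qed

lemma Flow_along_ivp_solution:
  fixes V :: "'a::banach \<Rightarrow> 'a"
  assumes lip: "L-lipschitz_on UNIV V" and sol: "ivp_solution V x T \<gamma>" and s: "s \<in> {0..T - 1}"
  shows "Flow V (\<gamma> s) = \<gamma> (s + 1)"
proof -
  have "ivp_solution V (\<gamma> s) (T - s) (\<lambda>t. \<gamma> (s + t))"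
    using sol by (rule ivp_solution_shift) (use s in auto)
  with lip show ?thesis by (rule Flow_eq_ivp_solution) (use s in auto)
qed

lemma Flow_square_fixed_point_path:
  fixes V :: "'a::banach \<Rightarrow> 'a"
  assumes lip: "L-lipschitz_on UNIV V" and p: "Flow V (Flow V p) = p"
  obtains \<gamma> :: "real \<Rightarrow> 'a" where "continuous_on {0..1} \<gamma>" "\<gamma> 0 = p" "\<gamma> 1 = Flow V p"
    "\<And>t. t \<in> {0..1} \<Longrightarrow> Flow V (Flow V (\<gamma> t)) = \<gamma> t"
proof -
  obtain \<gamma> where sol: "ivp_solution V p 3 \<gamma>"
    using ivp_solution_exists[OF lip, of 3] by auto
  have step: "Flow V (\<gamma> s) = \<gamma> (s + 1)" if "s \<in> {0..2}" for s
    using Flow_along_ivp_solution[OF lip sol] that by simp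
  have \<gamma>0: "\<gamma> 0 = p" using sol by (simp add: ivp_solution_def)
  then have \<gamma>1: "\<gamma> 1 = Flow V p" using step[of 0] by simp
  then have "\<gamma> 2 = p" using step[of 1] p by simp
  then have sol2: "ivp_solution V p 1 (\<lambda>t. \<gamma> (2 + t))"
    using ivp_solution_shift[OF sol, of 2] by simp
  show ?thesis
  proof (rule that)
    show "continuous_on {0..1} \<gamma>"
      using ivp_solution_continuous[OF sol] by (rule continuous_on_subset) auto
    show "\<gamma> 0 = p" "\<gamma> 1 = Flow V p" by (fact \<gamma>0 \<gamma>1)+
  next
    fix t :: real assume t: "t \<in> {0..1}"
    have "Flow V (Flow V (\<gamma> t)) = \<gamma> (2 + t)"
      using step[of t] step[of "t + 1"] t by (simp add: add.commute add.left_commute)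
    also have "\<dots> = \<gamma> t"
      using ivp_solution_unique[OF lip sol2 ivp_solution_restrict[OF sol] t] by simp
    finally show "Flow V (Flow V (\<gamma> t)) = \<gamma> t" .
  qed
qed

lemma Flow_square_not_contracting_moved_ball:
  fixes V :: "'a::euclidean_space \<Rightarrow> 'a"
  assumes lip: "L-lipschitz_on UNIV V" and cont: "continuous_on UNIV (Flow V)" and r: "0 < r"
    and square: "\<And>x. x \<in> cball a r \<Longrightarrow> dist (Flow V (Flow V x)) (a + (1/2) *\<^sub>R (x - a)) < r / 4"
    and moved: "\<And>x. x \<in> cball a r \<Longrightarrow> r < dist (Flow V x) a"
  shows False
proof -
  have half: "dist (a + (1/2) *\<^sub>R (x - a)) a = dist x a / 2"
    "dist x (a + (1/2) *\<^sub>R (x - a)) = dist x a / 2" for x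
  proof -
    have "x - (a + (1/2) *\<^sub>R (x - a)) = (1 - 1/2) *\<^sub>R (x - a)"
      by (simp only: scaleR_diff_left) simp
    then show "dist (a + (1/2) *\<^sub>R (x - a)) a = dist x a / 2"
      "dist x (a + (1/2) *\<^sub>R (x - a)) = dist x a / 2"
      by (simp_all add: dist_norm)
  qed
  have fixed_near_centre: "dist x a < r / 2" if "x \<in> cball a r" "Flow V (Flow V x) = x" for x
    using square[OF that(1)] half(2)[of x] that(2) by simp
  obtain p where p: "p \<in> cball a r" "(Flow V \<circ> Flow V) p = p"
  proof (rule brouwer_ball[OF r])
    show "continuous_on (cball a r) (Flow V \<circ> Flow V)"
      by (intro continuous_on_compose continuous_on_subset[OF cont]) auto
    show "Flow V \<circ> Flow V \<in> cball a r \<rightarrow> cball a r"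
    proof
      fix x assume x: "x \<in> cball a r"
      have "dist (Flow V (Flow V x)) a
            \<le> dist (Flow V (Flow V x)) (a + (1/2) *\<^sub>R (x - a)) + dist (a + (1/2) *\<^sub>R (x - a)) a"
        by (rule dist_triangle)
      then show "(Flow V \<circ> Flow V) x \<in> cball a r"
        using square[OF x] half(1)[of x] x r by (simp add: dist_commute)
    qed
  qed
  obtain \<gamma> :: "real \<Rightarrow> 'a" where \<gamma>: "continuous_on {0..1} \<gamma>" "\<gamma> 0 = p" "\<gamma> 1 = Flow V p"
    "\<And>t. t \<in> {0..1} \<Longrightarrow> Flow V (Flow V (\<gamma> t)) = \<gamma> t"
    using Flow_square_fixed_point_path[OF lip] p(2) by auto
  have "dist (\<gamma> 0) a \<le> r / 2" using fixed_near_centre[OF p(1)] p(2) \<gamma>(2) by simp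
  moreover have "r / 2 \<le> dist (\<gamma> 1) a" using moved[OF p(1)] \<gamma>(3) r by simp
  moreover have "continuous_on {0..1} (\<lambda>t. dist (\<gamma> t) a)" by (intro continuous_intros \<gamma>(1))
  ultimately obtain t where t: "t \<in> {0..1}" "dist (\<gamma> t) a = r / 2"
    using IVT'[of "\<lambda>t. dist (\<gamma> t) a" 0 "r / 2" 1] by auto
  then have "\<gamma> t \<in> cball a r" using r by (simp add: dist_commute)
  with fixed_near_centre[OF _ \<gamma>(4)[OF t(1)]] t(2) show False by simp
qed

section \<open>Lipschitz continuity of MLPs\<close>

text \<open>The constant depends on the output coordinate, as weight matrices have infinitely many rows.\<close>

definition coordwise_lipschitz :: "nat \<Rightarrow> ((nat \<Rightarrow> real) \<Rightarrow> (nat \<Rightarrow> real)) \<Rightarrow> bool" where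
  "coordwise_lipschitz n f \<longleftrightarrow>
     (\<forall>i. \<exists>C\<ge>0. \<forall>x y. \<bar>f x i - f y i\<bar> \<le> C * (\<Sum>j<n. \<bar>x j - y j\<bar>))"

lemma coordwise_lipschitzD:
  assumes "coordwise_lipschitz n f"
  obtains C where "\<And>i. 0 \<le> C i" "\<And>i x y. \<bar>f x i - f y i\<bar> \<le> C i * (\<Sum>j<n. \<bar>x j - y j\<bar>)"
  using assms unfolding coordwise_lipschitz_def by metis

lemma coordwise_lipschitz_affine_layer: "coordwise_lipschitz n (affine_layer n W b)"
  unfolding coordwise_lipschitz_def
proof (intro allI exI conjI)
  fix i
  let ?C = "\<Sum>j<n. \<bar>W i j\<bar>"
  show "0 \<le> ?C" by (simp add: sum_nonneg)
  fix x y :: "nat \<Rightarrow> real"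
  have "\<bar>affine_layer n W b x i - affine_layer n W b y i\<bar> = \<bar>\<Sum>j<n. W i j * (x j - y j)\<bar>"
    by (simp add: affine_layer_def sum_subtractf right_diff_distrib)
  also have "\<dots> \<le> (\<Sum>j<n. \<bar>W i j\<bar> * \<bar>x j - y j\<bar>)"
    by (rule order_trans[OF sum_abs]) (simp add: abs_mult)
  also have "\<dots> \<le> (\<Sum>j<n. ?C * \<bar>x j - y j\<bar>)"
    by (intro sum_mono mult_right_mono member_le_sum) auto
  finally show "\<bar>affine_layer n W b x i - affine_layer n W b y i\<bar> \<le> ?C * (\<Sum>j<n. \<bar>x j - y j\<bar>)"
    by (simp add: sum_distrib_left)
qed

lemma coordwise_lipschitz_compose:
  assumes g: "coordwise_lipschitz m g" and f: "coordwise_lipschitz n f"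
  shows "coordwise_lipschitz n (g \<circ> f)"
proof -
  obtain C where C: "\<And>i. 0 \<le> C i" "\<And>i x y. \<bar>g x i - g y i\<bar> \<le> C i * (\<Sum>j<m. \<bar>x j - y j\<bar>)"
    using coordwise_lipschitzD[OF g] by blast
  obtain D where D: "\<And>i. 0 \<le> D i" "\<And>i x y. \<bar>f x i - f y i\<bar> \<le> D i * (\<Sum>j<n. \<bar>x j - y j\<bar>)"
    using coordwise_lipschitzD[OF f] by blast
  show ?thesis
    unfolding coordwise_lipschitz_def
  proof (intro allI exI conjI)
    fix i
    show "0 \<le> C i * (\<Sum>k<m. D k)" using C(1) D(1) by (simp add: sum_nonneg)
    fix x y :: "nat \<Rightarrow> real"
    have "\<bar>(g \<circ> f) x i - (g \<circ> f) y i\<bar> \<le> C i * (\<Sum>k<m. \<bar>f x k - f y k\<bar>)"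
      by (simp add: C(2))
    also have "\<dots> \<le> C i * (\<Sum>k<m. D k * (\<Sum>j<n. \<bar>x j - y j\<bar>))"
      by (intro mult_left_mono sum_mono D(2) C(1))
    finally show "\<bar>(g \<circ> f) x i - (g \<circ> f) y i\<bar> \<le> C i * (\<Sum>k<m. D k) * (\<Sum>j<n. \<bar>x j - y j\<bar>)"
      by (simp add: sum_distrib_right mult.assoc)
  qed
qed

lemma coordwise_lipschitz_activation:
  assumes \<sigma>: "C-lipschitz_on UNIV \<sigma>" and f: "coordwise_lipschitz n f"
  shows "coordwise_lipschitz n (\<lambda>x i. \<sigma> (f x i))"
proof -
  obtain D where D: "\<And>i. 0 \<le> D i" "\<And>i x y. \<bar>f x i - f y i\<bar> \<le> D i * (\<Sum>j<n. \<bar>x j - y j\<bar>)"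
    using coordwise_lipschitzD[OF f] by blast
  have C: "0 \<le> C" using \<sigma> by (rule lipschitz_on_nonneg)
  show ?thesis
    unfolding coordwise_lipschitz_def
  proof (intro allI exI conjI)
    fix i
    show "0 \<le> C * D i" using C D(1) by simp
    fix x y :: "nat \<Rightarrow> real"
    have "\<bar>\<sigma> (f x i) - \<sigma> (f y i)\<bar> \<le> C * \<bar>f x i - f y i\<bar>"
      using lipschitz_onD[OF \<sigma>] by (simp add: dist_real_def)
    also have "\<dots> \<le> C * (D i * (\<Sum>j<n. \<bar>x j - y j\<bar>))" by (intro mult_left_mono D(2) C)
    finally show "\<bar>\<sigma> (f x i) - \<sigma> (f y i)\<bar> \<le> C * D i * (\<Sum>j<n. \<bar>x j - y j\<bar>)"
      by (simp add: mult.assoc)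
  qed
qed

lemma coordwise_lipschitz_mlp_eval:
  assumes \<sigma>: "C-lipschitz_on UNIV \<sigma>"
  shows "Ls \<noteq> [] \<Longrightarrow> coordwise_lipschitz (fst (hd Ls)) (mlp_eval \<sigma> Ls)"
proof (induction Ls rule: induct_list012)
  case (2 l)
  then show ?case by (cases l) (simp add: coordwise_lipschitz_affine_layer)
next
  case (3 l l' Ls)
  obtain n W b where l: "l = (n, W, b)" by (cases l) auto
  have "mlp_eval \<sigma> (l # l' # Ls) = mlp_eval \<sigma> (l' # Ls) \<circ> (\<lambda>x i. \<sigma> (affine_layer n W b x i))"
    by (simp add: l fun_eq_iff)
  moreover have "coordwise_lipschitz n (mlp_eval \<sigma> (l' # Ls) \<circ> (\<lambda>x i. \<sigma> (affine_layer n W b x i)))"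
    using 3(2) by (intro coordwise_lipschitz_compose
        coordwise_lipschitz_activation[OF \<sigma> coordwise_lipschitz_affine_layer]) simp
  ultimately show ?case by (metis l fst_conv list.sel(1))
qed simp

lemma sigma_MLP_lipschitz:
  fixes \<Phi> :: "real^'n \<Rightarrow> real^'n"
  assumes \<Phi>: "is_sigma_MLP \<sigma> \<Phi>" and \<sigma>: "C-lipschitz_on UNIV \<sigma>"
  obtains L where "L-lipschitz_on UNIV \<Phi>"
proof -
  obtain Ls and e :: "'n \<Rightarrow> nat" where Ls: "Ls \<noteq> []" "fst (hd Ls) = CARD('n)"
    and \<Phi>_eq: "\<And>x. \<Phi> x = (\<chi> i. mlp_eval \<sigma> Ls (\<lambda>j. x $ inv_into UNIV e j) (e i))"
    using \<Phi> unfolding is_sigma_MLP_def by blast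
  obtain D where D: "\<And>i. 0 \<le> D i"
    "\<And>i x y. \<bar>mlp_eval \<sigma> Ls x i - mlp_eval \<sigma> Ls y i\<bar> \<le> D i * (\<Sum>j<CARD('n). \<bar>x j - y j\<bar>)"
    using coordwise_lipschitzD[OF coordwise_lipschitz_mlp_eval[OF \<sigma> Ls(1)]] Ls(2) by metis
  define L where "L = (\<Sum>i\<in>UNIV. D (e i)) * CARD('n)"
  have "L-lipschitz_on UNIV \<Phi>"
  proof (rule lipschitz_onI)
    show "0 \<le> L" unfolding L_def using D(1) by (simp add: sum_nonneg)
    fix y z :: "real^'n"
    have "dist (\<Phi> y) (\<Phi> z) \<le> (\<Sum>i\<in>UNIV. \<bar>(\<Phi> y - \<Phi> z) $ i\<bar>)"
      unfolding dist_norm by (rule norm_le_l1_cart)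
    also have "\<dots> \<le> (\<Sum>i\<in>UNIV. D (e i) * (\<Sum>j<CARD('n). dist y z))"
    proof (rule sum_mono)
      fix i
      have "\<bar>(\<Phi> y - \<Phi> z) $ i\<bar>
            \<le> D (e i) * (\<Sum>j<CARD('n). \<bar>y $ inv_into UNIV e j - z $ inv_into UNIV e j\<bar>)"
        using D(2) by (simp add: \<Phi>_eq)
      also have "\<dots> \<le> D (e i) * (\<Sum>j<CARD('n). dist y z)"
        using component_le_norm_cart[of "y - z"] D(1)
        by (intro mult_left_mono sum_mono) (simp_all add: dist_norm)
      finally show "\<bar>(\<Phi> y - \<Phi> z) $ i\<bar> \<le> D (e i) * (\<Sum>j<CARD('n). dist y z)" .
    qed
    also have "\<dots> = L * dist y z" by (simp add: L_def sum_distrib_right flip: sum_distrib_left) (simp add: mult_ac)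
    finally show "dist (\<Phi> y) (\<Phi> z) \<le> L * dist y z" .
  qed
  then show ?thesis by (rule that)
qed

section \<open>Rotations in a coordinate plane, twists and radial maps\<close>

definition plane_rot :: "'n \<Rightarrow> 'n \<Rightarrow> real \<Rightarrow> real^'n \<Rightarrow> real^'n" where
  "plane_rot i j \<alpha> v = (\<chi> k. if k = i then cos \<alpha> * v $ i - sin \<alpha> * v $ j
                          else if k = j then sin \<alpha> * v $ i + cos \<alpha> * v $ j else v $ k)"

lemma continuous_on_plane_rot [continuous_intros]:
  fixes \<alpha> :: "'a::t2_space \<Rightarrow> real"
  assumes "continuous_on S \<alpha>" "continuous_on S v"
  shows "continuous_on S (\<lambda>x. plane_rot i j (\<alpha> x) (v x))"
  unfolding plane_rot_def
proof (intro continuous_on_vec_lambda)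
  fix k
  show "continuous_on S (\<lambda>x. if k = i then cos (\<alpha> x) * v x $ i - sin (\<alpha> x) * v x $ j
          else if k = j then sin (\<alpha> x) * v x $ i + cos (\<alpha> x) * v x $ j else v x $ k)"
    by (cases "k = i"; cases "k = j") (auto intro!: continuous_intros assms)
qed

lemma plane_rot_diff: "plane_rot i j \<alpha> (v - w) = plane_rot i j \<alpha> v - plane_rot i j \<alpha> w"
  by (simp add: vec_eq_iff plane_rot_def algebra_simps)

lemma plane_rot_pi: "plane_rot i j pi v = (\<chi> k. if k = i \<or> k = j then - v $ k else v $ k)"
  by (simp add: vec_eq_iff plane_rot_def)

lemma plane_rot_pi_pi: "plane_rot i j pi (plane_rot i j pi v) = v"
  by (simp add: plane_rot_pi vec_eq_iff)

context
  fixes i j :: "'n::finite"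
  assumes ij: "i \<noteq> j"
begin

lemma plane_rot_add: "plane_rot i j \<alpha> (plane_rot i j \<beta> v) = plane_rot i j (\<alpha> + \<beta>) v"
  using ij by (simp add: vec_eq_iff plane_rot_def cos_add sin_add algebra_simps)

lemma plane_rot_zero: "plane_rot i j 0 v = v"
  by (simp add: vec_eq_iff plane_rot_def)

lemma norm_plane_rot: "norm (plane_rot i j \<alpha> v) = norm v"
proof -
  have split: "(\<Sum>k\<in>UNIV. f k) = f i + f j + (\<Sum>k\<in>UNIV - {i} - {j}. f k)" for f :: "'n \<Rightarrow> real"
    using ij by (simp add: sum.remove[of UNIV i] sum.remove[of "UNIV - {i}" j] algebra_simps)
  let ?w = "plane_rot i j \<alpha> v"
  have "(cos \<alpha> * v$i - sin \<alpha> * v$j)\<^sup>2 + (sin \<alpha> * v$i + cos \<alpha> * v$j)\<^sup>2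
        = ((sin \<alpha>)\<^sup>2 + (cos \<alpha>)\<^sup>2) * ((v$i)\<^sup>2 + (v$j)\<^sup>2)"
    by algebra
  then have "(?w $ i)\<^sup>2 + (?w $ j)\<^sup>2 = (v $ i)\<^sup>2 + (v $ j)\<^sup>2"
    using ij by (simp add: plane_rot_def)
  moreover have "(\<Sum>k\<in>UNIV - {i} - {j}. (?w $ k)\<^sup>2) = (\<Sum>k\<in>UNIV - {i} - {j}. (v $ k)\<^sup>2)"
    by (rule sum.cong) (auto simp: plane_rot_def)
  ultimately have "(\<Sum>k\<in>UNIV. (?w $ k)\<^sup>2) = (\<Sum>k\<in>UNIV. (v $ k)\<^sup>2)"
    unfolding split[of "\<lambda>k. (?w $ k)\<^sup>2"] split[of "\<lambda>k. (v $ k)\<^sup>2"] by linarith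
  then show ?thesis by (simp add: norm_vec_def L2_set_def)
qed

end

definition twist_map :: "'n \<Rightarrow> 'n \<Rightarrow> real^'n \<Rightarrow> (real \<Rightarrow> real) \<Rightarrow> real^'n \<Rightarrow> real^'n" where
  "twist_map i j c \<theta> x = c + plane_rot i j (\<theta> (norm (x - c))) (x - c)"

lemma continuous_on_twist_map:
  assumes "continuous_on UNIV \<theta>"
  shows "continuous_on UNIV (twist_map i j c \<theta>)"
proof -
  have "continuous_on UNIV (\<lambda>x. \<theta> (norm (x - c)))"
    by (rule continuous_on_compose2[OF assms]) (auto intro!: continuous_intros)
  then show ?thesis unfolding twist_map_def by (intro continuous_intros)
qed

lemma dist_twist_map_const:
  assumes "i \<noteq> j"
  shows "dist (twist_map i j c (\<lambda>_. \<alpha>) z) (twist_map i j c (\<lambda>_. \<alpha>) w) = dist z w"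
  using norm_plane_rot[OF assms] by (simp add: twist_map_def dist_norm flip: plane_rot_diff)

lemma twist_map_pi_involution: "twist_map i j c (\<lambda>_. pi) (twist_map i j c (\<lambda>_. pi) z) = z"
  by (simp add: twist_map_def plane_rot_pi_pi)

lemma homeomorphism_twist_map:
  assumes ij: "i \<noteq> j" and \<theta>: "continuous_on UNIV \<theta>"
  shows "homeomorphism UNIV UNIV (twist_map i j c \<theta>) (twist_map i j c (\<lambda>s. - \<theta> s))"
proof -
  have norm_twist: "norm (twist_map i j c \<eta> x - c) = norm (x - c)" for \<eta> x
    by (simp add: twist_map_def norm_plane_rot[OF ij])
  have inverse: "twist_map i j c \<eta> (twist_map i j c (\<lambda>s. - \<eta> s) x) = x" for \<eta> x
    by (simp add: twist_map_def norm_plane_rot[OF ij] plane_rot_add[OF ij] plane_rot_zero[OF ij])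
  show ?thesis
  proof (rule homeomorphismI)
    show "continuous_on UNIV (twist_map i j c \<theta>)"
      "continuous_on UNIV (twist_map i j c (\<lambda>s. - \<theta> s))"
      using \<theta> by (intro continuous_on_twist_map continuous_on_minus; assumption)+
  qed (use inverse[of \<theta>] inverse[of "\<lambda>s. - \<theta> s"] in auto)
qed

definition radial_map :: "'a::real_normed_vector \<Rightarrow> (real \<Rightarrow> real) \<Rightarrow> 'a \<Rightarrow> 'a" where
  "radial_map a m x = a + m (norm (x - a)) *\<^sub>R (x - a)"

lemma homeomorphism_radial_map:
  assumes cont: "continuous_on UNIV m" "continuous_on UNIV k"
    and nonneg: "\<And>s. 0 \<le> s \<Longrightarrow> 0 \<le> m s" "\<And>s. 0 \<le> s \<Longrightarrow> 0 \<le> k s"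
    and inverse: "\<And>s. 0 \<le> s \<Longrightarrow> k (m s * s) * m s = 1" "\<And>s. 0 \<le> s \<Longrightarrow> m (k s * s) * k s = 1"
  shows "homeomorphism UNIV UNIV (radial_map a m) (radial_map a k)"
proof -
  have inv: "radial_map a g (radial_map a f x) = x"
    if "\<And>s. 0 \<le> s \<Longrightarrow> 0 \<le> f s" "\<And>s. 0 \<le> s \<Longrightarrow> g (f s * s) * f s = 1" for f g x
  proof -
    have "norm (radial_map a f x - a) = f (norm (x - a)) * norm (x - a)"
      using that(1)[of "norm (x - a)"] by (simp add: radial_map_def)
    then have "radial_map a g (radial_map a f x)
               = a + (g (f (norm (x - a)) * norm (x - a)) * f (norm (x - a))) *\<^sub>R (x - a)"
      by (simp only: radial_map_def[of a g]) (simp add: radial_map_def)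
    then show ?thesis using that(2)[of "norm (x - a)"] by simp
  qed
  have "continuous_on UNIV (radial_map a f)" if "continuous_on UNIV f" for f
  proof -
    have "continuous_on UNIV (\<lambda>x. f (norm (x - a)))"
      by (rule continuous_on_compose2[OF that]) (auto intro!: continuous_intros)
    then show ?thesis unfolding radial_map_def by (intro continuous_intros)
  qed
  with inv[of m k, OF nonneg(1) inverse(1)] inv[of k m, OF nonneg(2) inverse(2)] show ?thesis
    using cont by (intro homeomorphismI) auto
qed

text \<open>\<open>s \<mapsto> shrink_profile s * s\<close> is the piecewise linear map with slopes \<open>1/2\<close>, \<open>3/2\<close>, \<open>1\<close>
  on \<open>[0, 1/32]\<close>, \<open>[1/32, 1/16]\<close>, \<open>[1/16, \<infinity>)\<close>; \<open>expand_profile\<close> is the profile of its inverse.\<close>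

definition shrink_profile :: "real \<Rightarrow> real" where
  "shrink_profile s = min 1 (3/2 - 1 / (32 * max s (1/32)))"

definition expand_profile :: "real \<Rightarrow> real" where
  "expand_profile t = max 1 ((2 + 1 / (16 * max t (1/64))) / 3)"

lemma shrink_profile_small: "s \<le> 1/32 \<Longrightarrow> shrink_profile s = 1/2"
  by (simp add: shrink_profile_def max_def)

lemma shrink_profile_middle:
  assumes "1/32 \<le> s" "s \<le> 1/16"
  shows "shrink_profile s = (48 * s - 1) / (32 * s)"
proof -
  have "max s (1/32) = s" using assms by simp
  moreover have "3/2 - 1 / (32 * s) \<le> 1" using assms by (simp add: field_simps)
  ultimately have "shrink_profile s = 3/2 - 1 / (32 * s)" by (simp add: shrink_profile_def)
  also have "\<dots> = (48 * s - 1) / (32 * s)" using assms by (simp add: field_simps)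
  finally show ?thesis .
qed

lemma shrink_profile_large: "1/16 \<le> s \<Longrightarrow> shrink_profile s = 1"
  by (simp add: shrink_profile_def max_def field_simps)

lemma expand_profile_small: "t \<le> 1/64 \<Longrightarrow> expand_profile t = 2"
  by (simp add: expand_profile_def max_def)

lemma expand_profile_middle:
  assumes "1/64 \<le> t" "t \<le> 1/16"
  shows "expand_profile t = (32 * t + 1) / (48 * t)"
proof -
  have "max t (1/64) = t" using assms by simp
  then have "expand_profile t = max 1 ((2 + 1 / (16 * t)) / 3)" by (simp add: expand_profile_def)
  also have "(2 + 1 / (16 * t)) / 3 = (32 * t + 1) / (48 * t)" using assms by (simp add: field_simps)
  also have "max 1 ((32 * t + 1) / (48 * t)) = (32 * t + 1) / (48 * t)"
    using assms by (simp add: field_simps)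
  finally show ?thesis .
qed

lemma expand_profile_large: "1/16 \<le> t \<Longrightarrow> expand_profile t = 1"
  by (simp add: expand_profile_def max_def field_simps)

lemma shrink_profile_ge_half: "1/2 \<le> shrink_profile s"
proof -
  consider "s \<le> 1/32" | "1/32 \<le> s" "s \<le> 1/16" | "1/16 \<le> s" by linarith
  then show ?thesis
    by cases (simp_all add: shrink_profile_small shrink_profile_middle shrink_profile_large field_simps)
qed

lemma expand_profile_ge_1: "1 \<le> expand_profile t"
  by (simp add: expand_profile_def)

lemma continuous_on_shrink_profile: "continuous_on UNIV shrink_profile"
  unfolding shrink_profile_def by (intro continuous_intros) (auto simp: max_def)

lemma continuous_on_expand_profile: "continuous_on UNIV expand_profile"
  unfolding expand_profile_def by (intro continuous_intros) (auto simp: max_def)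

lemma expand_shrink_profile: "expand_profile (shrink_profile s * s) * shrink_profile s = 1"
proof -
  consider "s \<le> 1/32" | "1/32 \<le> s" "s \<le> 1/16" | "1/16 \<le> s" by linarith
  then show ?thesis
  proof cases
    case 2
    then have "shrink_profile s * s = (48 * s - 1) / 32" by (simp add: shrink_profile_middle)
    moreover have "expand_profile ((48 * s - 1) / 32) = 32 * s / (48 * s - 1)"
      using 2 by (subst expand_profile_middle) (simp_all add: field_simps)
    ultimately have "expand_profile (shrink_profile s * s) * shrink_profile s
                     = 32 * s / (48 * s - 1) * ((48 * s - 1) / (32 * s))"
      using 2 by (simp only: shrink_profile_middle)
    also have "\<dots> = 1" using 2 by simp
    finally show ?thesis .
  qed (simp_all add: shrink_profile_small expand_profile_small shrink_profile_large expand_profile_large)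
qed

lemma shrink_expand_profile: "0 \<le> t \<Longrightarrow> shrink_profile (expand_profile t * t) * expand_profile t = 1"
proof -
  assume "0 \<le> t"
  then consider "t \<le> 1/64" | "1/64 \<le> t" "t \<le> 1/16" | "1/16 \<le> t" by linarith
  then show ?thesis
  proof cases
    case 2
    then have "expand_profile t * t = (32 * t + 1) / 48" by (simp add: expand_profile_middle)
    moreover have "shrink_profile ((32 * t + 1) / 48) = 48 * t / (32 * t + 1)"
      using 2 by (subst shrink_profile_middle) (simp_all add: field_simps)
    ultimately have "shrink_profile (expand_profile t * t) * expand_profile t
                     = 48 * t / (32 * t + 1) * ((32 * t + 1) / (48 * t))"
      using 2 by (simp only: expand_profile_middle)
    also have "\<dots> = 1" using 2 by simp
    finally show ?thesis .
  qed (simp_all add: shrink_profile_small expand_profile_small shrink_profile_large expand_profile_large)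
qed

lemma homeomorphism_radial_shrink:
  "homeomorphism UNIV UNIV (radial_map a shrink_profile) (radial_map a expand_profile)"
proof (rule homeomorphism_radial_map)
  show "0 \<le> shrink_profile s" "0 \<le> expand_profile s" for s
    using shrink_profile_ge_half[of s] expand_profile_ge_1[of s] by linarith+
qed (simp_all add: continuous_on_shrink_profile continuous_on_expand_profile
    expand_shrink_profile shrink_expand_profile)

section \<open>A homeomorphism of the cube far from all time-one maps\<close>

lemma H_memberI:
  fixes \<phi> :: "real^'n \<Rightarrow> real^'n"
  assumes hom: "homeomorphism UNIV UNIV \<phi> \<phi>'" and K: "compact K" "K \<subseteq> P"
    and supp: "\<And>x. x \<notin> K \<Longrightarrow> \<phi> x = x"
  shows "\<phi> \<in> H P"
proof -
  have "inv \<phi> = \<phi>'" using hom by (intro inv_equality) (auto simp: homeomorphism_def)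
  moreover have "homotopic_with_canon (\<lambda>_. True) UNIV UNIV \<phi> id"
    using hom by (intro homotopic_with_linear) (auto simp: homeomorphism_def)
  ultimately show ?thesis using hom K supp unfolding H_def by blast
qed

lemma H_continuous: "\<psi> \<in> H P \<Longrightarrow> continuous_on UNIV \<psi>"
  unfolding H_def homeomorphism_def by auto

lemma H_bounded_diff:
  fixes \<phi> \<psi> :: "real^'n \<Rightarrow> real^'n"
  assumes "\<phi> \<in> H P" "\<psi> \<in> H P"
  shows "bounded (range (\<lambda>x. \<phi> x - \<psi> x))"
proof -
  obtain K1 K2 where K: "compact K1" "compact K2"
    and supp: "\<And>x. x \<notin> K1 \<Longrightarrow> \<phi> x = x" "\<And>x. x \<notin> K2 \<Longrightarrow> \<psi> x = x"
    using assms unfolding H_def by blast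
  have cont: "continuous_on UNIV (\<lambda>x. \<phi> x - \<psi> x)"
    using H_continuous[OF assms(1)] H_continuous[OF assms(2)] by (intro continuous_intros)
  have "bounded ((\<lambda>x. \<phi> x - \<psi> x) ` (K1 \<union> K2))"
    by (intro compact_imp_bounded compact_continuous_image compact_Un K continuous_on_subset[OF cont])
      auto
  moreover have "range (\<lambda>x. \<phi> x - \<psi> x) \<subseteq> (\<lambda>x. \<phi> x - \<psi> x) ` (K1 \<union> K2) \<union> {0}"
  proof -
    have "\<phi> x - \<psi> x \<in> (\<lambda>x. \<phi> x - \<psi> x) ` (K1 \<union> K2) \<union> {0}" for x
    proof (cases "x \<in> K1 \<union> K2")
      case False
      then show ?thesis using supp by simp
    qed (rule UnI1, rule imageI)
    then show ?thesis by blast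
  qed
  ultimately show ?thesis
    using bounded_subset bounded_Un finite_imp_bounded[of "{0}"] by blast
qed

lemma norm_le_d_inf:
  assumes "bounded (range (\<lambda>x. \<phi> x - \<psi> x))"
  shows "norm (\<phi> x - \<psi> x) \<le> d_inf \<phi> \<psi>"
proof -
  obtain B where "\<And>x. norm (\<phi> x - \<psi> x) \<le> B" using assms by (auto simp: bounded_iff)
  then show ?thesis unfolding d_inf_def by (intro cSUP_upper bdd_aboveI2) auto
qed

definition cube_center :: "real^'n" where
  "cube_center = (\<chi> k. 1/2)"

lemma cball_cube_center_subset_unit_cube: "cball cube_center (1/2) \<subseteq> unit_cube"
proof
  fix x :: "real^'n" assume "x \<in> cball cube_center (1/2)"
  then have "\<bar>x $ k - 1/2\<bar> \<le> 1/2" for k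
    using component_le_norm_cart[of "x - cube_center" k]
    by (simp add: cube_center_def dist_norm norm_minus_commute)
  then show "x \<in> unit_cube" unfolding unit_cube_def abs_le_iff by auto
qed

definition swap_angle :: "real \<Rightarrow> real" where
  "swap_angle s = pi * max 0 (min 1 (2 - 4 * s))"

definition swap_source :: "'n \<Rightarrow> real^'n" where
  "swap_source i = cube_center + (1/8) *\<^sub>R axis i 1"

definition swap_target :: "'n \<Rightarrow> real^'n" where
  "swap_target i = cube_center - (1/8) *\<^sub>R axis i 1"

definition swap_map :: "'n \<Rightarrow> 'n \<Rightarrow> real^'n \<Rightarrow> real^'n" where
  "swap_map i j = twist_map i j cube_center swap_angle \<circ> radial_map (swap_source i) shrink_profile"

lemma dist_swap_points:
  "dist (swap_source i) cube_center = 1/8" "dist (swap_target i) cube_center = 1/8"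
  "dist (swap_source i) (swap_target i) = 1/4"
proof -
  have "swap_source i - swap_target i = (1/4) *\<^sub>R axis i 1"
    by (simp add: swap_source_def swap_target_def vec_eq_iff axis_def)
  then show "dist (swap_source i) cube_center = 1/8" "dist (swap_target i) cube_center = 1/8"
    "dist (swap_source i) (swap_target i) = 1/4"
    by (simp_all add: swap_source_def swap_target_def dist_norm)
qed

lemma half_turn_swap_source:
  "twist_map i j cube_center (\<lambda>_. pi) (swap_source i) = swap_target i"
  by (simp add: twist_map_def plane_rot_pi swap_source_def swap_target_def vec_eq_iff axis_def)

context
  fixes i j :: "'n::finite"
  assumes ij: "i \<noteq> j"
begin

lemma swap_map_near_source:
  assumes "dist x (swap_source i) \<le> 1/32"
  shows "swap_map i j x
           = twist_map i j cube_center (\<lambda>_. pi) (swap_source i + (1/2) *\<^sub>R (x - swap_source i))"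
proof -
  let ?g = "swap_source i + (1/2) *\<^sub>R (x - swap_source i)"
  have "radial_map (swap_source i) shrink_profile x = ?g"
    using assms by (simp add: radial_map_def shrink_profile_small dist_norm)
  moreover have "dist ?g cube_center \<le> 1/4"
    using dist_triangle[of ?g cube_center "swap_source i"] dist_swap_points(1)[of i] assms
    by (simp add: dist_norm)
  ultimately show ?thesis
    by (simp add: swap_map_def twist_map_def swap_angle_def dist_norm)
qed

lemma swap_map_near_target:
  assumes "dist z (swap_target i) \<le> 1/16"
  shows "swap_map i j z = twist_map i j cube_center (\<lambda>_. pi) z"
proof -
  have "1/16 \<le> dist z (swap_source i)"
    using dist_triangle[of "swap_source i" "swap_target i" z] dist_swap_points(3)[of i] assms
    by (simp add: dist_commute)
  then have "radial_map (swap_source i) shrink_profile z = z"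
    by (simp add: radial_map_def shrink_profile_large dist_norm)
  moreover have "dist z cube_center \<le> 1/4"
    using dist_triangle[of z cube_center "swap_target i"] dist_swap_points(2)[of i] assms by simp
  ultimately show ?thesis
    by (simp add: swap_map_def twist_map_def swap_angle_def dist_norm)
qed

lemma swap_map_in_H: "swap_map i j \<in> H unit_cube"
proof (rule H_memberI)
  have "continuous_on UNIV swap_angle" unfolding swap_angle_def by (intro continuous_intros)
  then show "homeomorphism UNIV UNIV (swap_map i j)
      (radial_map (swap_source i) expand_profile \<circ> twist_map i j cube_center (\<lambda>s. - swap_angle s))"
    unfolding swap_map_def
    by (rule homeomorphism_compose[OF homeomorphism_radial_shrink homeomorphism_twist_map[OF ij]])
  show "compact (cball cube_center (1/2))" by simp
  show "cball cube_center (1/2) \<subseteq> unit_cube" by (rule cball_cube_center_subset_unit_cube)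
  fix x :: "real^'n" assume "x \<notin> cball cube_center (1/2)"
  then have far: "1/2 < dist x cube_center" by (simp add: dist_commute)
  then have "1/16 \<le> dist x (swap_source i)"
    using dist_triangle[of x cube_center "swap_source i"] dist_swap_points(1)[of i]
    by (simp add: dist_commute)
  then have "radial_map (swap_source i) shrink_profile x = x"
    by (simp add: radial_map_def shrink_profile_large dist_norm)
  with far show "swap_map i j x = x"
    by (simp add: swap_map_def twist_map_def swap_angle_def dist_norm plane_rot_zero[OF ij])
qed

lemma near_swap_map:
  assumes close: "\<And>x. dist (\<psi> x) (swap_map i j x) < 1/256"
    and x: "x \<in> cball (swap_source i) (1/32)"
  shows "dist (\<psi> (\<psi> x)) (swap_source i + (1/2) *\<^sub>R (x - swap_source i)) < 1/32 / 4"
    and "1/32 < dist (\<psi> x) (swap_source i)"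
proof -
  define a b where "a = swap_source i" and "b = swap_target i"
  define P where "P = twist_map i j cube_center (\<lambda>_. pi)"
  define g where "g = a + (1/2) *\<^sub>R (x - a)"
  have P_isometry: "dist (P z) (P w) = dist z w" for z w
    unfolding P_def by (rule dist_twist_map_const[OF ij])
  have xa: "dist x a \<le> 1/32" using x by (simp add: a_def dist_commute)
  have \<phi>x: "swap_map i j x = P g" unfolding P_def g_def a_def by (rule swap_map_near_source) (use xa a_def in simp)
  have "dist (P g) b = dist g a"
    using P_isometry[of g a] half_turn_swap_source[of i j] by (simp add: P_def a_def b_def)
  also have "\<dots> \<le> 1/64" using xa by (simp add: g_def dist_norm)
  finally have \<psi>x_near_b: "dist (\<psi> x) b < 1/256 + 1/64"
    using dist_triangle[of "\<psi> x" b "P g"] close[of x] \<phi>x by simp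
  then have "swap_map i j (\<psi> x) = P (\<psi> x)"
    unfolding P_def by (intro swap_map_near_target) (simp add: b_def)
  then have "dist (swap_map i j (\<psi> x)) g = dist (\<psi> x) (swap_map i j x)"
    using P_isometry[of "\<psi> x" "P g"] \<phi>x by (simp add: P_def twist_map_pi_involution)
  then show "dist (\<psi> (\<psi> x)) (swap_source i + (1/2) *\<^sub>R (x - swap_source i)) < 1/32 / 4"
    using dist_triangle[of "\<psi> (\<psi> x)" g "swap_map i j (\<psi> x)"] close[of x] close[of "\<psi> x"]
    by (simp add: g_def a_def)
  show "1/32 < dist (\<psi> x) (swap_source i)"
    using dist_triangle[of a b "\<psi> x"] dist_swap_points(3)[of i] \<psi>x_near_b
    by (simp add: a_def b_def dist_commute)
qed

end

theorem theorem1: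
  fixes \<sigma> :: "real \<Rightarrow> real"
  assumes "CARD('n) > 1"
    and "\<exists>C. C-lipschitz_on UNIV \<sigma>"
  shows "\<exists>\<phi> \<in> H (unit_cube :: (real^'n) set). \<exists>\<epsilon>>0.
           \<forall>\<psi> \<in> NODE \<sigma> (unit_cube :: (real^'n) set). d_inf \<phi> \<psi> \<ge> \<epsilon>"
proof -
  obtain i j :: 'n where ij: "i \<noteq> j"
    using assms(1) card_le_Suc0_iff_eq[of "UNIV :: 'n set"] by (auto simp: not_le)
  obtain C where \<sigma>: "C-lipschitz_on UNIV \<sigma>" using assms(2) by blast
  show ?thesis
  proof (intro bexI[OF _ swap_map_in_H[OF ij]] exI[of _ "1/256"] conjI ballI)
    fix \<psi> :: "real^'n \<Rightarrow> real^'n" assume "\<psi> \<in> NODE \<sigma> unit_cube"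
    then obtain \<Phi> where \<psi>: "\<psi> = Flow \<Phi>" "is_sigma_MLP \<sigma> \<Phi>" "\<psi> \<in> H unit_cube"
      by (auto simp: NODE_def)
    obtain L where \<Phi>: "L-lipschitz_on UNIV \<Phi>" using sigma_MLP_lipschitz[OF \<psi>(2) \<sigma>] .
    show "1/256 \<le> d_inf (swap_map i j) \<psi>"
    proof (rule ccontr)
      assume "\<not> 1/256 \<le> d_inf (swap_map i j) \<psi>"
      then have "dist (\<psi> x) (swap_map i j x) < 1/256" for x
        using norm_le_d_inf[OF H_bounded_diff[OF swap_map_in_H[OF ij] \<psi>(3)], of x]
        by (simp add: dist_norm norm_minus_commute)
      with near_swap_map[OF ij] show False
        using Flow_square_not_contracting_moved_ball[OF \<Phi>, of "1/32" "swap_source i"]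
          H_continuous[OF \<psi>(3)] \<psi>(1) by auto
    qed
  qed simp
qed

end
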